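(* Let $n \geq 1$, $z \geq 2$, $\epsilon > 0$, and let $\mathbf{f}_1^{(0)}, \dots, \mathbf{f}_n^{(0)}$ be probability vectors in $\mathbb{R}^z$. For $t \geq 1$ define recursively $$p_{i,j}^{(t)} = \frac{\alpha_i^{(t)}}{\epsilon + D\left(\mathbf{f}_i^{(t-1)}, \mathbf{f}_j^{(t-1)}\right)}, \qquad \mathbf{f}_i^{(t)} = \sum_{j=1}^n p_{i,j}^{(t)} \mathbf{f}_j^{(t-1)},$$ where $\alpha_i^{(t)} > 0$ normalizes so that $\sum_{j} p_{i,j}^{(t)} = 1$ and $D(\mathbf{u}, \mathbf{v}) = \sqrt{\frac{1}{z}\sum_{k=1}^{z} (u_k - v_k)^2}$. Let $R(\mathbf{g}, e) = 2g_e - \sum_{k=1}^z g_k^2$ be the quadratic scoring rule, and for constants $x > 0$ and $y \in \mathbb{R}$ let $R'(\mathbf{g}, e) = x R(\mathbf{g}, e) + y$. Then $R'$ is effective with respect to the weights $\{p_{i,j}^{(t)}\}$ at every time $t \ge 1$; that is, for every $t \ge 1$ and all $i, j, k \in \{1,\dots,n\}$, $$p_{i,j}^{(t)} < p_{i,k}^{(t)} \iff \mathbb{E}_{\mathbf{f}_i^{(t-1)}}\left[R'\left(\mathbf{f}_k^{(t-1)}\right)\right] > \mathbb{E}_{\mathbf{f}_i^{(t-1)}}\left[R'\left(\mathbf{f}_j^{(t-1)}\right)\right].$$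
   Context: For probability vectors $\mathbf{f}, \mathbf{g} \in \mathbb{R}^z$ and a scoring rule $S$, the $\mathbf{f}$-expected score of reporting $\mathbf{g}$ is $\mathbb{E}_{\mathbf{f}}[S(\mathbf{g})] = \sum_{e=1}^z f_e\, S(\mathbf{g}, e)$. *)

theory Defs
  imports Complex_Main
begin

text \<open>Vectors in R^z are represented as functions nat => real, component e for e < z
  (0-based). A family of n vectors is a function nat => nat => real, agent i < n.\<close>

definition prob_vec :: "nat \<Rightarrow> (nat \<Rightarrow> real) \<Rightarrow> bool" where
  "prob_vec z u \<longleftrightarrow> (\<forall>e<z. 0 \<le> u e) \<and> (\<Sum>e<z. u e) = 1"

definition D :: "nat \<Rightarrow> (nat \<Rightarrow> real) \<Rightarrow> (nat \<Rightarrow> real) \<Rightarrow> real" where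
  "D z u v = sqrt ((1 / real z) * (\<Sum>k<z. (u k - v k)^2))"

definition alpha :: "nat \<Rightarrow> nat \<Rightarrow> real \<Rightarrow> (nat \<Rightarrow> nat \<Rightarrow> real) \<Rightarrow> nat \<Rightarrow> real" where
  "alpha n z eps f i = 1 / (\<Sum>j<n. 1 / (eps + D z (f i) (f j)))"

definition weight :: "nat \<Rightarrow> nat \<Rightarrow> real \<Rightarrow> (nat \<Rightarrow> nat \<Rightarrow> real) \<Rightarrow> nat \<Rightarrow> nat \<Rightarrow> real" where
  "weight n z eps f i j = alpha n z eps f i / (eps + D z (f i) (f j))"

definition update :: "nat \<Rightarrow> nat \<Rightarrow> real \<Rightarrow> (nat \<Rightarrow> nat \<Rightarrow> real) \<Rightarrow> nat \<Rightarrow> nat \<Rightarrow> real" where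
  "update n z eps f i e = (\<Sum>j<n. weight n z eps f i j * f j e)"

primrec fseq :: "nat \<Rightarrow> nat \<Rightarrow> real \<Rightarrow> (nat \<Rightarrow> nat \<Rightarrow> real) \<Rightarrow> nat \<Rightarrow> nat \<Rightarrow> nat \<Rightarrow> real" where
  "fseq n z eps f0 0 = f0"
| "fseq n z eps f0 (Suc t) = update n z eps (fseq n z eps f0 t)"

definition p :: "nat \<Rightarrow> nat \<Rightarrow> real \<Rightarrow> (nat \<Rightarrow> nat \<Rightarrow> real) \<Rightarrow> nat \<Rightarrow> nat \<Rightarrow> nat \<Rightarrow> real" where
  "p n z eps f0 t i j = weight n z eps (fseq n z eps f0 (t - 1)) i j"

definition expected_score :: "nat \<Rightarrow> (nat \<Rightarrow> real) \<Rightarrow> ((nat \<Rightarrow> real) \<Rightarrow> nat \<Rightarrow> real) \<Rightarrow> (nat \<Rightarrow> real) \<Rightarrow> real" where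
  "expected_score z f S g = (\<Sum>e<z. f e * S g e)"

definition quad_rule :: "nat \<Rightarrow> (nat \<Rightarrow> real) \<Rightarrow> nat \<Rightarrow> real" where
  "quad_rule z g e = 2 * g e - (\<Sum>k<z. (g k)^2)"

end

theory Submission
  imports Defs
begin

text \<open>For a probability vector \<open>f\<close> the expected quadratic score of a report \<open>g\<close> is
  \<open>\<parallel>f\<parallel>\<^sup>2 - \<parallel>f - g\<parallel>\<^sup>2\<close>, so it decreases strictly with the distance \<open>D(f, g)\<close>; a positive affine
  rescaling of the rule preserves this. The weight \<open>p\<^sub>i\<^sub>j\<close> is also strictly decreasing in
  \<open>D(f\<^sub>i, f\<^sub>j)\<close>, so both orderings coincide. All that has to be carried along the dynamics is
  that every opinion keeps total mass 1, which holds because the weights of each agent sum to 1.\<close>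

lemma D_nonneg: "D z u v \<ge> 0"
  unfolding D_def by (simp add: sum_nonneg)

lemma D_less_iff_sum_sq_less:
  assumes "z > 0"
  shows "D z u v < D z u w \<longleftrightarrow> (\<Sum>k<z. (u k - v k)^2) < (\<Sum>k<z. (u k - w k)^2)"
  using assms unfolding D_def by (simp add: divide_less_cancel)

lemma sum_inverse_distance_pos:
  fixes n :: nat
  assumes "eps > 0" "n \<ge> 1"
  shows "(\<Sum>j<n. 1 / (eps + D z (f i) (f j))) > 0"
proof (rule sum_pos)
  show "{..<n} \<noteq> {}" using assms(2) by (simp add: lessThan_empty_iff)
  show "1 / (eps + D z (f i) (f j)) > 0" for j
    using assms(1) D_nonneg[of z "f i" "f j"] by simp
qed simp

lemma alpha_pos:
  assumes "eps > 0" "n \<ge> 1"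
  shows "alpha n z eps f i > 0"
  using sum_inverse_distance_pos[OF assms] unfolding alpha_def by simp

lemma sum_weight_eq_1:
  assumes "eps > 0" "n \<ge> 1"
  shows "(\<Sum>j<n. weight n z eps f i j) = 1"
proof -
  have "(\<Sum>j<n. weight n z eps f i j) = alpha n z eps f i * (\<Sum>j<n. 1 / (eps + D z (f i) (f j)))"
    unfolding weight_def sum_distrib_left by simp
  also have "\<dots> = 1"
    using sum_inverse_distance_pos[OF assms, of z f i] unfolding alpha_def by simp
  finally show ?thesis .
qed

lemma weight_less_iff_D_less:
  assumes "eps > 0" "n \<ge> 1"
  shows "weight n z eps f i j < weight n z eps f i k \<longleftrightarrow> D z (f i) (f k) < D z (f i) (f j)"
proof -
  have "eps + D z (f i) (f j) > 0" "eps + D z (f i) (f k) > 0"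
    using assms by (auto intro: add_pos_nonneg D_nonneg)
  with alpha_pos[OF assms] show ?thesis
    unfolding weight_def by (simp add: field_simps)
qed

lemma sum_update_eq_1:
  assumes "eps > 0" "n \<ge> 1" "\<forall>j<n. (\<Sum>e<z. f j e) = 1"
  shows "(\<Sum>e<z. update n z eps f i e) = 1"
proof -
  have "(\<Sum>e<z. update n z eps f i e) = (\<Sum>j<n. weight n z eps f i j * (\<Sum>e<z. f j e))"
    by (simp add: update_def sum.swap[of _ "{..<z}"] sum_distrib_left)
  also have "\<dots> = (\<Sum>j<n. weight n z eps f i j)"
    using assms(3) by simp
  finally show ?thesis using sum_weight_eq_1[OF assms(1,2)] by simp
qed

lemma sum_fseq_eq_1:
  assumes "eps > 0" "n \<ge> 1" "\<forall>i<n. prob_vec z (f0 i)" "i < n"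
  shows "(\<Sum>e<z. fseq n z eps f0 t i e) = 1"
  using assms(4)
proof (induction t arbitrary: i)
  case 0
  then show ?case using assms(3) by (simp add: prob_vec_def)
next
  case (Suc t)
  then show ?case using sum_update_eq_1[OF assms(1,2)] by simp
qed

lemma expected_score_affine:
  assumes "(\<Sum>e<z. f e) = 1"
  shows "expected_score z f (\<lambda>g e. x * S g e + y) g = x * expected_score z f S g + y"
proof -
  have "expected_score z f (\<lambda>g e. x * S g e + y) g = x * expected_score z f S g + y * (\<Sum>e<z. f e)"
    unfolding expected_score_def by (simp add: algebra_simps sum.distrib sum_distrib_left)
  with assms show ?thesis by simp
qed

lemma expected_score_quad_rule:
  assumes "(\<Sum>e<z. f e) = 1"
  shows "expected_score z f (quad_rule z) g = (\<Sum>e<z. (f e)^2) - (\<Sum>e<z. (f e - g e)^2)"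
proof -
  have "expected_score z f (quad_rule z) g
      = 2 * (\<Sum>e<z. f e * g e) - (\<Sum>e<z. f e) * (\<Sum>k<z. (g k)^2)"
    unfolding expected_score_def quad_rule_def
    by (simp add: algebra_simps sum_subtractf sum_distrib_left sum_distrib_right)
      (rule sum.swap)
  also have "\<dots> = (\<Sum>e<z. (f e)^2) - (\<Sum>e<z. (f e - g e)^2)"
    using assms by (simp add: power2_diff sum.distrib sum_subtractf sum_distrib_left mult.assoc)
  finally show ?thesis .
qed

theorem corollary2:
  fixes n z :: nat and eps x y :: real and f0 :: "nat \<Rightarrow> nat \<Rightarrow> real"
  assumes "n \<ge> 1" and "z \<ge> 2" and "eps > 0"
    and "\<forall>i<n. prob_vec z (f0 i)"
    and "x > 0"
  shows "\<forall>t\<ge>1. \<forall>i<n. \<forall>j<n. \<forall>k<n.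
    (p n z eps f0 t i j < p n z eps f0 t i k \<longleftrightarrow>
      expected_score z (fseq n z eps f0 (t - 1) i) (\<lambda>g e. x * quad_rule z g e + y) (fseq n z eps f0 (t - 1) k)
      > expected_score z (fseq n z eps f0 (t - 1) i) (\<lambda>g e. x * quad_rule z g e + y) (fseq n z eps f0 (t - 1) j))"
proof (intro allI impI)
  fix t i j k :: nat
  assume "i < n"
  define f where "f = fseq n z eps f0 (t - 1)"
  have mass: "(\<Sum>e<z. f i e) = 1"
    unfolding f_def using sum_fseq_eq_1 assms(1,3,4) \<open>i < n\<close> by blast
  have "p n z eps f0 t i j < p n z eps f0 t i k \<longleftrightarrow> D z (f i) (f k) < D z (f i) (f j)"
    unfolding p_def f_def using weight_less_iff_D_less assms(1,3) by blast
  also have "\<dots> \<longleftrightarrow> (\<Sum>e<z. (f i e - f k e)^2) < (\<Sum>e<z. (f i e - f j e)^2)"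
    using D_less_iff_sum_sq_less assms(2) by simp
  also have "\<dots> \<longleftrightarrow> expected_score z (f i) (\<lambda>g e. x * quad_rule z g e + y) (f k)
      > expected_score z (f i) (\<lambda>g e. x * quad_rule z g e + y) (f j)"
    using assms(5) by (simp add: expected_score_affine[OF mass] expected_score_quad_rule[OF mass])
  finally show "p n z eps f0 t i j < p n z eps f0 t i k \<longleftrightarrow>
      expected_score z (fseq n z eps f0 (t - 1) i) (\<lambda>g e. x * quad_rule z g e + y) (fseq n z eps f0 (t - 1) k)
      > expected_score z (fseq n z eps f0 (t - 1) i) (\<lambda>g e. x * quad_rule z g e + y) (fseq n z eps f0 (t - 1) j)"
    unfolding f_def .
qed

end
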